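(* The size of the smallest string attractor of the length-$n$ prefix $\mathbf{vtm}[0..n-1]$ of the ternary word $\mathbf{vtm}$ is $$\begin{cases}1,& n=1;\\ 2,& n=2;\\ 3,& 3\le n\le 6;\\ 4,& n\ge 7.\end{cases}$$
   Context: The word $\mathbf{vtm}=210201\cdots$ is the infinite fixed point, starting with $2$, of the morphism $2\mapsto 210$, $1\mapsto 20$, $0\mapsto 1$; it is indexed starting at $0$. A string attractor of a finite word $w=w[0..n-1]$ is a set $S\subseteq\{0,\ldots,n-1\}$ such that every nonempty factor $f$ of $w$ has an occurrence $w[p..q]=f$ with $p\le i\le q$ for some $i\in S$. *)

theory Defs
  imports Main
begin

fun vtm_morph :: "nat \<Rightarrow> nat list" where
  "vtm_morph a = (if a = 2 then [2,1,0] else if a = 1 then [2,0] else [1])"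

definition vtm_iter :: "nat \<Rightarrow> nat list" where
  "vtm_iter k = ((\<lambda>w. concat (map vtm_morph w)) ^^ k) [2]"

text \<open>The fixed point starting with 2: the k-th iterate of [2] is a prefix of the next one
  and has length at least k+1, so position i is already determined in iterate i+1.\<close>
definition vtm :: "nat \<Rightarrow> nat" where
  "vtm i = vtm_iter (Suc i) ! i"

definition vtm_prefix :: "nat \<Rightarrow> nat list" where
  "vtm_prefix n = map vtm [0..<n]"

text \<open>Factor w[p..q] (0-based, inclusive).\<close>
definition factor :: "'a list \<Rightarrow> nat \<Rightarrow> nat \<Rightarrow> 'a list" where
  "factor w p q = take (Suc q - p) (drop p w)"

definition string_attractor :: "'a list \<Rightarrow> nat set \<Rightarrow> bool" where
  "string_attractor w S \<longleftrightarrow> S \<subseteq> {..<length w} \<and>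
     (\<forall>p q. p \<le> q \<and> q < length w \<longrightarrow>
        (\<exists>p' q'. p' \<le> q' \<and> q' < length w \<and> factor w p' q' = factor w p q \<and>
                 (\<exists>i\<in>S. p' \<le> i \<and> i \<le> q')))"

definition min_attractor_size :: "'a list \<Rightarrow> nat" where
  "min_attractor_size w = (LEAST k. \<exists>S. string_attractor w S \<and> card S = k)"

end

theory Submission
  imports Defs
begin

text \<open>Reading the Thue--Morse word t as 0/1, vtm is its first difference: vtm(i) = 1 + t(i+1) - t(i).
  So vtm[p..p+d-1] is determined by t[p..p+d], and a set hitting an occurrence of every factor
  t[p..p+d] of t[0..n] inside its first d positions is an attractor of vtm[0..n-1]. As t is the
  fixed point of 0 \<mapsto> 01, 1 \<mapsto> 10, such a set for t[0..m] (and t[0..m+1]) is carried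
  by i \<mapsto> 2i+1 to one for t[0..2m+1] (and t[0..2m+2]); starting from explicit sets of size 4
  for 6 \<le> m \<le> 12 this gives attractors of size 4 for all n \<ge> 7, and explicit ones for n \<le> 6.

  Conversely, an attractor contains a position of every letter. Three positions cannot suffice once
  all six factors ab with a \<noteq> b occur (n \<ge> 7): each must be covered by one of the six neighbours
  of the three positions, which fails because a 1 in vtm always has two different neighbours.\<close>

section \<open>Thue--Morse\<close>

fun thue_morse :: "nat \<Rightarrow> bool" where
  "thue_morse n = (if n = 0 then False else thue_morse (n div 2) \<noteq> odd n)"

declare thue_morse.simps [simp del]

lemma thue_morse_0 [simp]: "thue_morse 0 = False"
  by (simp add: thue_morse.simps)

lemma thue_morse_double [simp]: "thue_morse (2 * n) = thue_morse n"
  by (cases "n = 0") (simp_all add: thue_morse.simps [of "2 * n"])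

lemma thue_morse_double_Suc [simp]: "thue_morse (Suc (2 * n)) = (\<not> thue_morse n)"
  by (simp add: thue_morse.simps [of "Suc (2 * n)"])

lemma thue_morse_double_Suc_Suc [simp]: "thue_morse (Suc (Suc (2 * n))) = thue_morse (Suc n)"
  using thue_morse_double [of "Suc n"] by simp

lemma thue_morse_double_Suc_Suc_Suc [simp]:
  "thue_morse (Suc (Suc (Suc (2 * n)))) = (\<not> thue_morse (Suc n))"
  using thue_morse_double_Suc [of "Suc n"] by simp

lemma thue_morse_double_add: "e < 2 \<Longrightarrow> thue_morse (2 * n + e) = (thue_morse n \<noteq> odd e)"
  by (cases e) auto

lemma thue_morse_not_three_equal:
  "\<not> (thue_morse k = thue_morse (Suc k) \<and> thue_morse (Suc k) = thue_morse (Suc (Suc k)))"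
proof (cases "even k")
  case True
  then obtain m where "k = 2 * m" by blast
  then show ?thesis by simp
next
  case False
  then obtain m where "k = Suc (2 * m)" by (metis oddE Suc_eq_plus1)
  then show ?thesis by simp
qed

lemma thue_morse_double_agree:
  assumes "\<forall>j\<le>k. thue_morse (a' + j) = thue_morse (a + j)" and "j \<le> 2 * k + 1"
  shows "thue_morse (2 * a' + j) = thue_morse (2 * a + j)"
proof -
  have "j div 2 \<le> k" using assms(2) by linarith
  then have "thue_morse (a' + j div 2) = thue_morse (a + j div 2)" using assms(1) by blast
  moreover have "2 * a' + j = 2 * (a' + j div 2) + j mod 2" "2 * a + j = 2 * (a + j div 2) + j mod 2"
    by simp_all
  ultimately show ?thesis by (simp only: thue_morse_double_add [of "j mod 2"] mod_less_divisor)
qed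

section \<open>The word vtm as the first difference of Thue--Morse\<close>

definition thue_morse_diff :: "nat \<Rightarrow> nat" where
  "thue_morse_diff i =
     (if thue_morse i = thue_morse (Suc i) then 1 else if thue_morse (Suc i) then 2 else 0)"

definition vtm_morph_length :: "nat \<Rightarrow> nat" where
  "vtm_morph_length m = 2 * m + (if thue_morse m then 1 else 0)"

lemma vtm_morph_thue_morse_diff:
  "vtm_morph (thue_morse_diff m) = map thue_morse_diff [vtm_morph_length m..<vtm_morph_length (Suc m)]"
  by (cases "thue_morse m"; cases "thue_morse (Suc m)")
    (simp_all add: vtm_morph_length_def thue_morse_diff_def upt_rec)

lemma concat_vtm_morph_thue_morse_diff:
  "concat (map vtm_morph (map thue_morse_diff [0..<m])) = map thue_morse_diff [0..<vtm_morph_length m]"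
proof (induction m)
  case 0
  then show ?case by (simp add: vtm_morph_length_def)
next
  case (Suc m)
  have "vtm_morph_length m \<le> vtm_morph_length (Suc m)" by (simp add: vtm_morph_length_def)
  then have "[0..<vtm_morph_length (Suc m)] =
      [0..<vtm_morph_length m] @ [vtm_morph_length m..<vtm_morph_length (Suc m)]"
    by (metis le0 le_add_diff_inverse upt_add_eq_append)
  then show ?case using Suc by (simp add: vtm_morph_thue_morse_diff del: vtm_morph.simps)
qed

lemma vtm_iter_eq_thue_morse_diff:
  "\<exists>L. Suc k \<le> L \<and> vtm_iter k = map thue_morse_diff [0..<L]"
proof (induction k)
  case 0
  have "thue_morse_diff 0 = 2" using thue_morse_double_Suc [of 0] by (simp add: thue_morse_diff_def)
  then show ?case by (intro exI [of _ 1]) (simp add: vtm_iter_def)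
next
  case (Suc k)
  then obtain L where L: "Suc k \<le> L" "vtm_iter k = map thue_morse_diff [0..<L]" by blast
  have "vtm_iter (Suc k) = concat (map vtm_morph (vtm_iter k))" by (simp add: vtm_iter_def)
  also have "\<dots> = map thue_morse_diff [0..<vtm_morph_length L]"
    using L(2) concat_vtm_morph_thue_morse_diff by simp
  finally show ?case using L(1) by (intro exI [of _ "vtm_morph_length L"]) (simp add: vtm_morph_length_def)
qed

lemma vtm_eq_thue_morse_diff: "vtm i = thue_morse_diff i"
proof -
  obtain L where "Suc (Suc i) \<le> L" "vtm_iter (Suc i) = map thue_morse_diff [0..<L]"
    using vtm_iter_eq_thue_morse_diff by blast
  then show ?thesis by (simp add: vtm_def)
qed

lemma vtm_one_neighbours:
  assumes "vtm i = 1" and "0 < i"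
  shows "vtm (i - 1) \<noteq> vtm (Suc i)"
proof -
  obtain k where k: "i = Suc k" using assms(2) by (cases i) auto
  show ?thesis
    using assms(1) thue_morse_not_three_equal [of k] thue_morse_not_three_equal [of "Suc k"]
    unfolding k vtm_eq_thue_morse_diff thue_morse_diff_def by (auto split: if_splits)
qed

section \<open>String attractors\<close>

lemma string_attractor_finite: "string_attractor w S \<Longrightarrow> finite S"
  unfolding string_attractor_def using finite_subset by blast

lemma string_attractor_occurrence:
  assumes "string_attractor w S" and "p \<le> q" and "q < length w"
  obtains p' i where "p' + (q - p) < length w" and "\<forall>j\<le>q - p. w ! (p' + j) = w ! (p + j)"
    and "i \<in> S" and "p' \<le> i" and "i \<le> p' + (q - p)"
proof -
  obtain p' q' i where o: "p' \<le> q'" "q' < length w" "factor w p' q' = factor w p q"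
    "i \<in> S" "p' \<le> i" "i \<le> q'"
    using assms unfolding string_attractor_def by blast
  have q': "q' = p' + (q - p)"
    using arg_cong [OF o(3), of length] o(1,2) assms(2,3) by (simp add: factor_def)
  have "w ! (p' + j) = w ! (p + j)" if "j \<le> q - p" for j
    using arg_cong [OF o(3), of "\<lambda>u. u ! j"] that o(2) assms(2,3) q' by (simp add: factor_def)
  then show ?thesis using o q' by (intro that [of p' i]) simp_all
qed

lemma string_attractor_letter:
  assumes "string_attractor w S" and "p < length w"
  shows "\<exists>i\<in>S. w ! i = w ! p"
proof -
  obtain p' i where "\<forall>j\<le>p - p. w ! (p' + j) = w ! (p + j)" "i \<in> S" "p' \<le> i" "i \<le> p' + (p - p)"
    using string_attractor_occurrence [OF assms(1) order_refl assms(2)] by blast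
  then have "i \<in> S" "w ! i = w ! p" by auto
  then show ?thesis by blast
qed

lemma card_set_le_card_string_attractor:
  assumes "string_attractor w S"
  shows "card (set w) \<le> card S"
proof -
  have "set w \<subseteq> (\<lambda>i. w ! i) ` S"
    using string_attractor_letter [OF assms] by (metis imageI in_set_conv_nth subsetI)
  then have "card (set w) \<le> card ((\<lambda>i. w ! i) ` S)"
    using string_attractor_finite [OF assms] by (simp add: card_mono)
  also have "\<dots> \<le> card S"
    using string_attractor_finite [OF assms] by (rule card_image_le)
  finally show ?thesis .
qed

lemma string_attractor_pair:
  assumes "string_attractor w S" and "Suc p < length w"
  obtains p' where "Suc p' < length w" and "w ! p' = w ! p" and "w ! Suc p' = w ! Suc p"
    and "p' \<in> S \<or> Suc p' \<in> S"
proof -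
  obtain p' i where o: "p' + (Suc p - p) < length w" "\<forall>j\<le>Suc p - p. w ! (p' + j) = w ! (p + j)"
    "i \<in> S" "p' \<le> i" "i \<le> p' + (Suc p - p)"
    using string_attractor_occurrence [OF assms(1) le_SucI [OF order_refl] assms(2)] by blast
  show ?thesis
  proof (rule that)
    show "Suc p' < length w" using o(1) by simp
    show "w ! p' = w ! p" using spec [OF o(2), of 0] by simp
    show "w ! Suc p' = w ! Suc p" using spec [OF o(2), of 1] by simp
    have "i = p' \<or> i = Suc p'" using o(4,5) by simp linarith
    then show "p' \<in> S \<or> Suc p' \<in> S" using o(3) by blast
  qed
qed

lemma string_attractor_inj_pair:
  assumes "string_attractor w S" and "inj_on (\<lambda>i. w ! i) S" and "a \<in> S" and "b \<in> S"
    and "Suc p < length w" and "w ! p = w ! a" and "w ! Suc p = w ! b"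
  shows "(Suc a < length w \<and> w ! Suc a = w ! b) \<or> (0 < b \<and> w ! (b - 1) = w ! a)"
proof -
  obtain p' where p': "Suc p' < length w" "w ! p' = w ! a" "w ! Suc p' = w ! b"
    "p' \<in> S \<or> Suc p' \<in> S"
    using string_attractor_pair [OF assms(1,5)] assms(6,7) by metis
  then have "p' = a \<or> Suc p' = b" using assms(2-4) by (auto dest: inj_onD)
  then show ?thesis using p'(1-3) by auto
qed

lemma min_attractor_size_eqI:
  assumes "string_attractor w S" and "card S = k"
    and "\<And>S'. string_attractor w S' \<Longrightarrow> k \<le> card S'"
  shows "min_attractor_size w = k"
  unfolding min_attractor_size_def using assms by (intro Least_equality) blast+

definition string_attractor_check :: "'a list \<Rightarrow> nat list \<Rightarrow> bool" where
  "string_attractor_check w xs \<longleftrightarrow> list_all (\<lambda>i. i < length w) xs \<and>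
     list_all (\<lambda>p. list_all (\<lambda>q. list_ex (\<lambda>p'. p' + (q - p) < length w \<and>
         factor w p' (p' + (q - p)) = factor w p q \<and>
         list_ex (\<lambda>i. p' \<le> i \<and> i \<le> p' + (q - p)) xs)
       [0..<length w]) [p..<length w]) [0..<length w]"

lemma string_attractor_checkD:
  assumes "string_attractor_check w xs"
  shows "string_attractor w (set xs)"
  unfolding string_attractor_def
proof (intro conjI allI impI)
  show "set xs \<subseteq> {..<length w}"
    using assms by (auto simp: string_attractor_check_def list_all_iff)
next
  fix p q assume "p \<le> q \<and> q < length w"
  then have "p \<in> set [0..<length w]" "q \<in> set [p..<length w]" by auto
  then obtain p' where "p' + (q - p) < length w" "factor w p' (p' + (q - p)) = factor w p q"
    "list_ex (\<lambda>i. p' \<le> i \<and> i \<le> p' + (q - p)) xs"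
    using assms unfolding string_attractor_check_def list_all_iff list_ex_iff by blast
  then show "\<exists>p' q'. p' \<le> q' \<and> q' < length w \<and> factor w p' q' = factor w p q \<and>
      (\<exists>i\<in>set xs. p' \<le> i \<and> i \<le> q')"
    by (intro exI [of _ p'] exI [of _ "p' + (q - p)"]) (auto simp: list_ex_iff)
qed

section \<open>Upper bounds\<close>

definition tm_attractor :: "nat \<Rightarrow> nat set \<Rightarrow> bool" where
  "tm_attractor n S \<longleftrightarrow> S \<subseteq> {..<n} \<and>
     (\<forall>p d. 0 < d \<and> p + d \<le> n \<longrightarrow>
        (\<exists>p'. p' + d \<le> n \<and> (\<forall>j\<le>d. thue_morse (p' + j) = thue_morse (p + j)) \<and>
              (\<exists>i\<in>S. p' \<le> i \<and> i < p' + d)))"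

lemma tm_attractor_imp_string_attractor:
  assumes "tm_attractor n S"
  shows "string_attractor (vtm_prefix n) S"
  unfolding string_attractor_def
proof (intro conjI allI impI)
  show "S \<subseteq> {..<length (vtm_prefix n)}" using assms by (simp add: tm_attractor_def vtm_prefix_def)
next
  fix p q assume "p \<le> q \<and> q < length (vtm_prefix n)"
  then have pq: "p \<le> q" "q < n" by (auto simp: vtm_prefix_def)
  define d where "d = Suc q - p"
  have "0 < d" "p + d \<le> n" using pq by (auto simp: d_def)
  then obtain p' i where p': "p' + d \<le> n" "\<forall>j\<le>d. thue_morse (p' + j) = thue_morse (p + j)"
    "i \<in> S" "p' \<le> i" "i < p' + d"
    using assms unfolding tm_attractor_def by blast
  define q' where "q' = p' + (q - p)"
  have "vtm (p' + j) = vtm (p + j)" if "j < d" for j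
  proof -
    have "thue_morse (p' + j) = thue_morse (p + j)" "thue_morse (p' + Suc j) = thue_morse (p + Suc j)"
      using spec [OF p'(2), of j] spec [OF p'(2), of "Suc j"] that by simp_all
    then show ?thesis by (simp add: vtm_eq_thue_morse_diff thue_morse_diff_def)
  qed
  then have "factor (vtm_prefix n) p' q' = factor (vtm_prefix n) p q"
    using pq p'(1) by (intro nth_equalityI) (auto simp: factor_def vtm_prefix_def q'_def d_def)
  moreover have "p' \<le> q'" "q' < length (vtm_prefix n)" "p' \<le> i" "i \<le> q'"
    using pq p' by (auto simp: q'_def d_def vtm_prefix_def)
  ultimately show "\<exists>p' q'. p' \<le> q' \<and> q' < length (vtm_prefix n) \<and>
      factor (vtm_prefix n) p' q' = factor (vtm_prefix n) p q \<and> (\<exists>i\<in>S. p' \<le> i \<and> i \<le> q')"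
    using p'(3) by blast
qed

text \<open>A factor t[p..p+d] spanning at least two blocks t[2a], t[2a+1] is cut out of the image of
  t[a..b] under the Thue--Morse morphism, so an occurrence of t[a..b] hit at i yields one of
  t[p..p+d] hit at 2i+1.\<close>
lemma tm_attractor_double_cover:
  assumes "tm_attractor M S" and "p div 2 < (p + d) div 2" and "(p + d) div 2 \<le> M"
  shows "\<exists>p'. p' + d \<le> 2 * M + (p + d) mod 2 \<and>
      (\<forall>j\<le>d. thue_morse (p' + j) = thue_morse (p + j)) \<and>
      (\<exists>i\<in>S. p' \<le> 2 * i + 1 \<and> 2 * i + 1 < p' + d)"
proof -
  define a b where "a = p div 2" and "b = (p + d) div 2"
  have "0 < b - a" "a + (b - a) \<le> M" using assms(2,3) by (auto simp: a_def b_def)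
  then obtain a' i where a': "a' + (b - a) \<le> M"
    "\<forall>j\<le>b - a. thue_morse (a' + j) = thue_morse (a + j)" "i \<in> S" "a' \<le> i" "i < a' + (b - a)"
    using assms(1) unfolding tm_attractor_def by blast
  define p' where "p' = 2 * a' + p mod 2"
  have p: "p = 2 * a + p mod 2" and pd: "p + d = 2 * b + (p + d) mod 2"
    by (simp_all add: a_def b_def)
  have span: "p mod 2 + d = 2 * (b - a) + (p + d) mod 2"
    using p pd \<open>0 < b - a\<close> by arith
  then have len: "p' + d = 2 * (a' + (b - a)) + (p + d) mod 2" by (simp add: p'_def)
  have "thue_morse (p' + j) = thue_morse (p + j)" if "j \<le> d" for j
  proof -
    have "(p + d) mod 2 < 2" by simp
    then have "p mod 2 + j \<le> 2 * (b - a) + 1" using span that by linarith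
    then have "thue_morse (2 * a' + (p mod 2 + j)) = thue_morse (2 * a + (p mod 2 + j))"
      by (rule thue_morse_double_agree [OF a'(2)])
    then show ?thesis using p unfolding p'_def by (metis add.assoc)
  qed
  moreover have "p' \<le> 2 * i + 1" "2 * i + 1 < p' + d" using a'(4,5) len by (auto simp: p'_def)
  moreover have "p' + d \<le> 2 * M + (p + d) mod 2" using a'(1) len by simp
  ultimately show ?thesis using a'(3) by blast
qed

text \<open>The factors t[1..2] = 11 and t[5..6] = 00 of t[0..6] must be hit at their first position.\<close>
lemma tm_attractor_equal_pair:
  assumes "tm_attractor M S" and "6 \<le> M"
  shows "\<exists>i\<in>S. thue_morse i = c \<and> thue_morse (Suc i) = c"
proof -
  define p where "p = (if c then 1 else 5 :: nat)"
  have "thue_morse 1" "thue_morse 2" "\<not> thue_morse 5" "\<not> thue_morse 6" by code_simp+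
  then have "thue_morse p = c" "thue_morse (Suc p) = c" by (simp_all add: p_def eval_nat_numeral)
  have "0 < (1::nat)" "p + 1 \<le> M" using assms(2) by (simp_all add: p_def)
  then obtain p' i where o: "\<forall>j\<le>1. thue_morse (p' + j) = thue_morse (p + j)"
    "i \<in> S" "p' \<le> i" "i < p' + 1"
    using assms(1) unfolding tm_attractor_def by blast
  then have "i = p'" by simp
  then have "thue_morse i = thue_morse p" "thue_morse (Suc i) = thue_morse (Suc p)"
    using spec [OF o(1), of 0] spec [OF o(1), of 1] by simp_all
  then show ?thesis using o(2) \<open>thue_morse p = c\<close> \<open>thue_morse (Suc p) = c\<close> by auto
qed

lemma tm_attractor_double:
  assumes "tm_attractor (N div 2) S" and "tm_attractor ((N - 1) div 2) S" and "6 \<le> (N - 1) div 2"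
  shows "tm_attractor N ((\<lambda>i. 2 * i + 1) ` S)"
  unfolding tm_attractor_def
proof (intro conjI allI impI)
  have "S \<subseteq> {..<(N - 1) div 2}" using assms(2) by (simp add: tm_attractor_def)
  then show "(\<lambda>i. 2 * i + 1) ` S \<subseteq> {..<N}" by auto
next
  fix p d assume pd: "0 < d \<and> p + d \<le> N"
  show "\<exists>p'. p' + d \<le> N \<and> (\<forall>j\<le>d. thue_morse (p' + j) = thue_morse (p + j)) \<and>
      (\<exists>i\<in>(\<lambda>i. 2 * i + 1) ` S. p' \<le> i \<and> i < p' + d)"
  proof (cases "p div 2 < (p + d) div 2")
    case True
    obtain M where M: "tm_attractor M S" "(p + d) div 2 \<le> M" "2 * M + (p + d) mod 2 \<le> N"
    proof (cases "even (p + d)")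
      case True
      then show ?thesis using that [OF assms(1)] pd by auto
    next
      case False
      then have "(p + d) div 2 \<le> (N - 1) div 2 \<and> 2 * ((N - 1) div 2) + (p + d) mod 2 \<le> N"
        using pd by presburger
      then show ?thesis using that [OF assms(2)] by blast
    qed
    then obtain p' i where "p' + d \<le> N" "\<forall>j\<le>d. thue_morse (p' + j) = thue_morse (p + j)"
      "i \<in> S" "p' \<le> 2 * i + 1" "2 * i + 1 < p' + d"
      using tm_attractor_double_cover [OF _ True] by (meson order_trans)
    then show ?thesis by blast
  next
    case False
    then have "d = 1" "even p" using pd by presburger+
    then have "p = 2 * (p div 2)" by simp
    obtain i where i: "i \<in> S" "thue_morse i = (\<not> thue_morse (p div 2))"
      "thue_morse (Suc i) = (\<not> thue_morse (p div 2))"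
      using tm_attractor_equal_pair [OF assms(2,3)] by blast
    text \<open>t[p..p+1] = t(p/2), \<not> t(p/2) reappears at 2i+1,
      since t(2i+1) = \<not> t(i) and t(2i+2) = t(i+1).\<close>
    have "thue_morse (2 * i + 1 + j) = thue_morse (p + j)" if "j \<le> 1" for j
      using that i \<open>p = 2 * (p div 2)\<close> thue_morse_double [of "p div 2"]
        thue_morse_double_Suc [of "p div 2"] by (cases j) (auto simp: le_Suc_eq)
    moreover have "2 * i + 1 + d \<le> N"
      using i(1) assms(2) \<open>d = 1\<close> by (auto simp: tm_attractor_def)
    ultimately show ?thesis using i(1) \<open>d = 1\<close> by (intro exI [of _ "2 * i + 1"]) auto
  qed
qed

text \<open>Doubling to an even length N needs attractors at both levels (N - 1) div 2 and N div 2,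
  hence a common attractor of two consecutive prefixes is carried along.\<close>
definition has_tm_attractor4 :: "nat \<Rightarrow> bool" where
  "has_tm_attractor4 n \<longleftrightarrow> (\<exists>S. card S = 4 \<and> tm_attractor n S \<and> tm_attractor (Suc n) S)"

lemma has_tm_attractor4_double:
  assumes "has_tm_attractor4 ((N - 1) div 2)" and "6 \<le> (N - 1) div 2"
  shows "has_tm_attractor4 N"
proof -
  let ?m = "(N - 1) div 2"
  obtain S where S: "card S = 4" "tm_attractor ?m S" "tm_attractor (Suc ?m) S"
    using assms(1) by (auto simp: has_tm_attractor4_def)
  have "N div 2 = ?m \<or> N div 2 = Suc ?m" "Suc N div 2 = Suc ?m" using assms(2) by presburger+
  then have "tm_attractor (N div 2) S" "tm_attractor (Suc N div 2) S" using S(2,3) by auto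
  then have "tm_attractor N ((\<lambda>i. 2 * i + 1) ` S)" "tm_attractor (Suc N) ((\<lambda>i. 2 * i + 1) ` S)"
    using tm_attractor_double S(2,3) assms(2) \<open>N div 2 = ?m \<or> N div 2 = Suc ?m\<close> by auto
  moreover have "card ((\<lambda>i. 2 * i + 1) ` S) = 4"
    using S(1) by (simp add: card_image inj_on_def)
  ultimately show ?thesis unfolding has_tm_attractor4_def by blast
qed

definition tm_attractor_check :: "nat \<Rightarrow> nat list \<Rightarrow> bool" where
  "tm_attractor_check n xs \<longleftrightarrow> list_all (\<lambda>i. i < n) xs \<and>
     list_all (\<lambda>p. list_all (\<lambda>d. list_ex (\<lambda>p'.
         list_all (\<lambda>j. thue_morse (p' + j) = thue_morse (p + j)) [0..<Suc d] \<and>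
         list_ex (\<lambda>i. p' \<le> i \<and> i < p' + d) xs) [0..<Suc (n - d)]) [1..<Suc (n - p)]) [0..<Suc n]"

lemma tm_attractor_checkD:
  assumes "tm_attractor_check n xs"
  shows "tm_attractor n (set xs)"
  unfolding tm_attractor_def
proof (intro conjI allI impI)
  show "set xs \<subseteq> {..<n}" using assms by (auto simp: tm_attractor_check_def list_all_iff)
next
  fix p d assume pd: "0 < d \<and> p + d \<le> n"
  then have "p \<in> set [0..<Suc n]" "d \<in> set [1..<Suc (n - p)]" by auto
  then obtain p' where "p' \<in> set [0..<Suc (n - d)]"
    "list_all (\<lambda>j. thue_morse (p' + j) = thue_morse (p + j)) [0..<Suc d]"
    "list_ex (\<lambda>i. p' \<le> i \<and> i < p' + d) xs"
    using assms unfolding tm_attractor_check_def list_all_iff list_ex_iff by blast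
  then show "\<exists>p'. p' + d \<le> n \<and> (\<forall>j\<le>d. thue_morse (p' + j) = thue_morse (p + j)) \<and>
      (\<exists>i\<in>set xs. p' \<le> i \<and> i < p' + d)"
    using pd by (intro exI [of _ p']) (auto simp: list_all_iff list_ex_iff)
qed

lemma has_tm_attractor4_checkI:
  "tm_attractor_check n xs \<Longrightarrow> tm_attractor_check (Suc n) xs \<Longrightarrow> card (set xs) = 4 \<Longrightarrow>
    has_tm_attractor4 n"
  unfolding has_tm_attractor4_def using tm_attractor_checkD by blast

lemma has_tm_attractor4_from_6: "6 \<le> n \<Longrightarrow> has_tm_attractor4 n"
proof (induction n rule: less_induct)
  case (less n)
  show ?case
  proof (cases "n \<le> 12")
    case True
    have "has_tm_attractor4 6" "has_tm_attractor4 7" "has_tm_attractor4 8"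
      by (rule has_tm_attractor4_checkI [of _ "[1, 2, 3, 5]"]; code_simp)+
    moreover have "has_tm_attractor4 9" "has_tm_attractor4 10"
      by (rule has_tm_attractor4_checkI [of _ "[2, 3, 5, 7]"]; code_simp)+
    moreover have "has_tm_attractor4 11" by (rule has_tm_attractor4_checkI [of _ "[2, 3, 7, 9]"]; code_simp)
    moreover have "has_tm_attractor4 12" by (rule has_tm_attractor4_checkI [of _ "[3, 5, 7, 11]"]; code_simp)
    moreover have "n = 6 \<or> n = 7 \<or> n = 8 \<or> n = 9 \<or> n = 10 \<or> n = 11 \<or> n = 12"
      using True less.prems by linarith
    ultimately show ?thesis by (elim disjE) simp_all
  next
    case False
    then have "6 \<le> (n - 1) div 2" "(n - 1) div 2 < n" by presburger+
    then show ?thesis using less.IH has_tm_attractor4_double by blast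
  qed
qed

lemma vtm_prefix_attractor_card_4:
  assumes "7 \<le> n"
  obtains S where "string_attractor (vtm_prefix n) S" and "card S = 4"
proof -
  obtain S where "card S = 4" "tm_attractor n S"
    using has_tm_attractor4_from_6 [of n] assms unfolding has_tm_attractor4_def by auto
  then show ?thesis using that tm_attractor_imp_string_attractor by blast
qed

lemma vtm_prefix_small_attractor:
  assumes "1 \<le> n" and "n \<le> 6"
  obtains S where "string_attractor (vtm_prefix n) S" and "card S = min n 3"
proof -
  have "string_attractor_check (vtm_prefix 1) [0]" "string_attractor_check (vtm_prefix 2) [0, 1]"
    "string_attractor_check (vtm_prefix 3) [0, 1, 2]" "string_attractor_check (vtm_prefix 4) [0, 1, 2]"
    "string_attractor_check (vtm_prefix 5) [1, 2, 3]" "string_attractor_check (vtm_prefix 6) [1, 3, 4]"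
    by code_simp+
  moreover have "n = 1 \<or> n = 2 \<or> n = 3 \<or> n = 4 \<or> n = 5 \<or> n = 6" using assms by linarith
  ultimately have "\<exists>xs. string_attractor_check (vtm_prefix n) xs \<and> card (set xs) = min n 3"
    by (elim disjE) (auto intro!: exI)
  then show ?thesis using that string_attractor_checkD by blast
qed

section \<open>Lower bounds\<close>

lemma vtm_initial_letters:
  "vtm 0 = 2" "vtm 1 = 1" "vtm 2 = 0" "vtm 3 = 2" "vtm 4 = 0" "vtm 5 = 1" "vtm 6 = 2"
  by code_simp+

lemma card_set_vtm_prefix: "min n 3 \<le> card (set (vtm_prefix n))"
proof -
  have "vtm_prefix (min n 3) = take (min n 3) (vtm_prefix 3)" by (simp add: vtm_prefix_def take_map)
  moreover have "distinct (vtm_prefix 3)" by code_simp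
  ultimately have "card (set (vtm_prefix (min n 3))) = min n 3"
    by (simp add: distinct_card vtm_prefix_def)
  moreover have "set (vtm_prefix (min n 3)) \<subseteq> set (vtm_prefix n)" by (auto simp: vtm_prefix_def)
  ultimately show ?thesis by (metis card_mono finite_set)
qed

lemma vtm_prefix_attractor_subset: "string_attractor (vtm_prefix n) S \<Longrightarrow> S \<subseteq> {..<n}"
  by (simp add: string_attractor_def vtm_prefix_def)

lemma vtm_prefix_attractor_nth:
  "string_attractor (vtm_prefix n) S \<Longrightarrow> i \<in> S \<Longrightarrow> vtm_prefix n ! i = vtm i"
  using vtm_prefix_attractor_subset [of n S] by (auto simp: vtm_prefix_def)

lemma vtm_prefix_attractor_letter:
  assumes "string_attractor (vtm_prefix n) S" and "p < n"
  shows "\<exists>i\<in>S. vtm i = vtm p"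
  using string_attractor_letter [OF assms(1), of p] vtm_prefix_attractor_nth [OF assms(1)] assms(2)
  by (auto simp: vtm_prefix_def)

lemma vtm_prefix_attractor_inj_pair:
  assumes "string_attractor (vtm_prefix n) S" and "inj_on vtm S" and "a \<in> S" and "b \<in> S"
    and "Suc p < n" and "vtm p = vtm a" and "vtm (Suc p) = vtm b"
  shows "(Suc a < n \<and> vtm (Suc a) = vtm b) \<or> (0 < b \<and> vtm (b - 1) = vtm a)"
proof -
  have "a < n" "b < n" using vtm_prefix_attractor_subset [OF assms(1)] assms(3,4) by auto
  moreover have "inj_on (\<lambda>i. vtm_prefix n ! i) S"
    using assms(2) inj_on_cong [of S "\<lambda>i. vtm_prefix n ! i" vtm] vtm_prefix_attractor_nth [OF assms(1)]
    by blast
  ultimately show ?thesis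
    using string_attractor_inj_pair [OF assms(1) _ assms(3,4), of p] assms(5-7)
    by (auto simp: vtm_prefix_def)
qed

lemma vtm_prefix_attractor_card_ge_4:
  assumes A: "string_attractor (vtm_prefix n) S" and "7 \<le> n"
  shows "4 \<le> card S"
proof (rule ccontr)
  assume "\<not> 4 \<le> card S"
  moreover have "3 \<le> card S"
    using card_set_le_card_string_attractor [OF A] card_set_vtm_prefix [of n] assms(2) by simp
  ultimately have "card S = 3" by simp
  obtain i0 i1 i2 where i: "i0 \<in> S" "vtm i0 = 0" "i1 \<in> S" "vtm i1 = 1" "i2 \<in> S" "vtm i2 = 2"
    using vtm_prefix_attractor_letter [OF A, of 2] vtm_prefix_attractor_letter [OF A, of 1]
      vtm_prefix_attractor_letter [OF A, of 0] vtm_initial_letters assms(2) by auto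
  have "i0 \<noteq> i1" "i0 \<noteq> i2" "i1 \<noteq> i2" using i by auto
  then have "card {i0, i1, i2} = 3" by simp
  then have S: "S = {i0, i1, i2}"
    using i \<open>card S = 3\<close> card_subset_eq [OF string_attractor_finite [OF A]]
    by (metis empty_subsetI insert_subset)
  have "inj_on vtm S" using i unfolding S by (auto simp: inj_on_def)
  then have cover: "(Suc a < n \<and> vtm (Suc a) = vtm b) \<or> (0 < b \<and> vtm (b - 1) = vtm a)"
    if "a \<in> S" "b \<in> S" "p < 6" "vtm p = vtm a" "vtm (Suc p) = vtm b" for a b p
    using vtm_prefix_attractor_inj_pair [OF A _ that(1,2) _ that(4,5)] that(3) assms(2) by simp
  text \<open>The six factors 02, 20, 01, 10, 12, 21 of vtm[0..6] = 2102012 must be covered by the six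
    neighbours of i0, i1, i2. The neighbours of a 1 differ, so the neighbours of i1 cover 01 and 12,
    or 21 and 10; then 10 and 21, respectively 12 and 01, force the neighbours of i0 and i2,
    and 20, respectively 02, is left uncovered.\<close>
  have "(Suc i0 < n \<and> vtm (Suc i0) = 2) \<or> (0 < i2 \<and> vtm (i2 - 1) = 0)"
    using cover [of i0 i2 2] i vtm_initial_letters by simp
  moreover have "(Suc i2 < n \<and> vtm (Suc i2) = 0) \<or> (0 < i0 \<and> vtm (i0 - 1) = 2)"
    using cover [of i2 i0 3] i vtm_initial_letters by simp
  moreover have "(Suc i0 < n \<and> vtm (Suc i0) = 1) \<or> (0 < i1 \<and> vtm (i1 - 1) = 0)"
    using cover [of i0 i1 4] i vtm_initial_letters by simp
  moreover have "(Suc i1 < n \<and> vtm (Suc i1) = 0) \<or> (0 < i0 \<and> vtm (i0 - 1) = 1)"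
    using cover [of i1 i0 1] i vtm_initial_letters by (simp add: numeral_2_eq_2)
  moreover have "(Suc i1 < n \<and> vtm (Suc i1) = 2) \<or> (0 < i2 \<and> vtm (i2 - 1) = 1)"
    using cover [of i1 i2 5] i vtm_initial_letters by simp
  moreover have "(Suc i2 < n \<and> vtm (Suc i2) = 1) \<or> (0 < i1 \<and> vtm (i1 - 1) = 2)"
    using cover [of i2 i1 0] i vtm_initial_letters by simp
  moreover have "0 < i1 \<Longrightarrow> vtm (i1 - 1) \<noteq> vtm (Suc i1)" using vtm_one_neighbours i(4) by blast
  ultimately show False by auto
qed

theorem theorem7:
  fixes n :: nat
  assumes "n \<ge> 1"
  shows "min_attractor_size (vtm_prefix n) =
           (if n = 1 then 1 else if n = 2 then 2 else if n \<le> 6 then 3 else 4)"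
proof -
  let ?k = "if n = 1 then 1 else if n = 2 then 2 else if n \<le> 6 then 3 else 4 :: nat"
  have k: "?k = (if n \<le> 6 then min n 3 else 4)" using assms by auto
  obtain S where "string_attractor (vtm_prefix n) S" "card S = ?k"
  proof (cases "n \<le> 6")
    case True
    then show ?thesis using that vtm_prefix_small_attractor [OF assms] unfolding k by auto
  next
    case False
    then have "7 \<le> n" by simp
    then obtain S where "string_attractor (vtm_prefix n) S" "card S = 4"
      by (rule vtm_prefix_attractor_card_4)
    then show ?thesis using that False unfolding k by simp
  qed
  moreover have "?k \<le> card S'" if "string_attractor (vtm_prefix n) S'" for S'
    using card_set_le_card_string_attractor [OF that] card_set_vtm_prefix [of n]
      vtm_prefix_attractor_card_ge_4 [OF that] unfolding k by auto
  ultimately show ?thesis by (rule min_attractor_size_eqI)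
qed

end
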